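(* Let $G$ be a connected simple graph of order $n$ and let $M_{G_1}$ be a mixed graph whose underlying graph $G_1$ is a spanning subgraph of $G$. The following are equivalent: (a) $G$ (regarded as a mixed graph with no arcs) and $M_{G_1}$ are cospectral; (b) $\lambda_1(G)=\lambda_1(M_{G_1})$; (c) $G_1=G$, and $V(M_{G_1})$ has a partition $\bigcup_{j\in\mathbb{T}_6}V_j$ such that for each $j\in\mathbb{T}_6$ the induced mixed subgraph $M_{G_1}[V_j]$ contains only undirected edges, and every other edge of $M_{G_1}$ is an arc $\overrightarrow{uv}$ with $u\in V_j$ and $v\in V_{\bar\omega\cdot j}$ for some $j\in\mathbb{T}_6$; (d) $G$ and $M_{G_1}$ are switching equivalent.
   Context: A mixed graph $M_G$ is obtained from a finite simple graph $G$ by orienting the edges of some subset of $E(G)$ (arcs $\overrightarrow{uv}$; the others are undirected edges $\{u,v\}$). With $\omega=\frac{1+\mathbf{i}\sqrt3}{2}$, $N(M_G)$ has $(u,v)$-entry $\omega$ if $\overrightarrow{uv}$ is an arc, $\bar\omega$ if $\overrightarrow{vu}$ is an arc, $1$ for an undirected edge $\{u,v\}$, $0$ otherwise; eigenvalues of $M_G$ are those of $N(M_G)$, $\lambda_1$ denotes the largest one, and cospectral means same eigenvalue multiset. $\mathbb{T}_6=\{1,-1,\omega,\bar\omega,-\omega,-\bar\omega\}$. Given a partition $V(M_G)=\bigcup_{j\in\mathbb{T}_6}V_j$ into six possibly empty sets, an edge or arc $xy$ has type $(j,k)$ if $x\in V_j,y\in V_k$ (for arcs, directed from $x$ to $y$).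 The partition is admissible if every undirected edge has type $(j,j)$ or $(j,\omega j)$ for some $j$, and every arc has type $(j,j)$, $(j,\bar\omega j)$ or $(j,-\omega j)$ for some $j$. A three-way switching with respect to an admissible partition replaces each undirected edge of type $(j,\omega j)$ by an arc from its end in $V_j$ to its end in $V_{\omega j}$, replaces each arc of type $(j,\bar\omega j)$ by an undirected edge, and reverses each arc of type $(j,-\omega j)$. The converse of a mixed graph reverses all arcs. Two mixed graphs are switching equivalent if one is obtained from the other by a sequence of three-way switchings and taking converses. *)

theory Defs
  imports "Jordan_Normal_Form.Char_Poly" "HOL-Computational_Algebra.Polynomial"
begin

(* A mixed graph
   is a pair (E, A): E the undirected edges (symmetric), A the arcs
   (A u v means the arc from u to v). *)

type_synonym rel = "nat \<Rightarrow> nat \<Rightarrow> bool"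
type_synonym mixed_graph = "rel \<times> rel"

definition simple_graph :: "nat \<Rightarrow> rel \<Rightarrow> bool" where
  "simple_graph n E \<longleftrightarrow> (\<forall>u v. E u v \<longrightarrow> u < n \<and> v < n \<and> u \<noteq> v \<and> E v u)"

definition is_mixed_graph :: "nat \<Rightarrow> mixed_graph \<Rightarrow> bool" where
  "is_mixed_graph n M \<longleftrightarrow> simple_graph n (fst M) \<and>
     (\<forall>u v. snd M u v \<longrightarrow> u < n \<and> v < n \<and> u \<noteq> v \<and> \<not> snd M v u
              \<and> \<not> fst M u v)"

definition underlying :: "mixed_graph \<Rightarrow> rel" where
  "underlying M u v \<longleftrightarrow> fst M u v \<or> snd M u v \<or> snd M v u"

definition connected_graph :: "nat \<Rightarrow> rel \<Rightarrow> bool" where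
  "connected_graph n E \<longleftrightarrow> 0 < n \<and> (\<forall>u<n. \<forall>v<n. E\<^sup>*\<^sup>* u v)"

definition spanning_subgraph :: "rel \<Rightarrow> rel \<Rightarrow> bool" where
  "spanning_subgraph H G \<longleftrightarrow> (\<forall>u v. H u v \<longrightarrow> G u v)"

definition undirected :: "rel \<Rightarrow> mixed_graph" where
  "undirected E = (E, (\<lambda>_ _. False))"

definition omega :: complex where
  "omega = Complex (1/2) (sqrt 3 / 2)"

definition T6 :: "complex set" where
  "T6 = {1, -1, omega, cnj omega, - omega, - cnj omega}"

definition herm_adj :: "nat \<Rightarrow> mixed_graph \<Rightarrow> complex mat" where
  "herm_adj n M = mat n n (\<lambda>(u, v).
      if snd M u v then omega else if snd M v u then cnj omega
      else if fst M u v then 1 else 0)"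

definition eigenvalues :: "nat \<Rightarrow> mixed_graph \<Rightarrow> complex multiset" where
  "eigenvalues n M = proots (char_poly (herm_adj n M))"

definition cospectral :: "nat \<Rightarrow> mixed_graph \<Rightarrow> mixed_graph \<Rightarrow> bool" where
  "cospectral n M1 M2 \<longleftrightarrow> eigenvalues n M1 = eigenvalues n M2"

(* largest eigenvalue (all eigenvalues are real since N is Hermitian) *)
definition lambda1 :: "nat \<Rightarrow> mixed_graph \<Rightarrow> real" where
  "lambda1 n M = Max {x. eigenvalue (herm_adj n M) (complex_of_real x)}"

(* a partition into the six classes V_j, j \<in> T6, is a labelling p *)
definition partition6 :: "nat \<Rightarrow> (nat \<Rightarrow> complex) \<Rightarrow> bool" where
  "partition6 n p \<longleftrightarrow> (\<forall>v<n. p v \<in> T6)"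

definition admissible :: "nat \<Rightarrow> mixed_graph \<Rightarrow> (nat \<Rightarrow> complex) \<Rightarrow> bool" where
  "admissible n M p \<longleftrightarrow> partition6 n p \<and>
     (\<forall>x y. fst M x y \<longrightarrow> p y = p x \<or> p y = omega * p x \<or> p x = omega * p y) \<and>
     (\<forall>x y. snd M x y \<longrightarrow> p y = p x \<or> p y = cnj omega * p x \<or> p y = - omega * p x)"

definition three_way_switch :: "(nat \<Rightarrow> complex) \<Rightarrow> mixed_graph \<Rightarrow> mixed_graph" where
  "three_way_switch p M =
     ((\<lambda>x y. (fst M x y \<and> p x = p y)
           \<or> (snd M x y \<and> p y = cnj omega * p x)
           \<or> (snd M y x \<and> p x = cnj omega * p y)),
      (\<lambda>x y. (snd M x y \<and> p x = p y)
           \<or> (fst M x y \<and> p y = omega * p x)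
           \<or> (snd M y x \<and> p x = - omega * p y)))"

definition converse_mixed :: "mixed_graph \<Rightarrow> mixed_graph" where
  "converse_mixed M = (fst M, (\<lambda>x y. snd M y x))"

definition switch_step :: "nat \<Rightarrow> mixed_graph \<Rightarrow> mixed_graph \<Rightarrow> bool" where
  "switch_step n M M' \<longleftrightarrow>
     (\<exists>p. admissible n M p \<and> M' = three_way_switch p M) \<or> M' = converse_mixed M"

definition switching_equivalent :: "nat \<Rightarrow> mixed_graph \<Rightarrow> mixed_graph \<Rightarrow> bool" where
  "switching_equivalent n M1 M2 \<longleftrightarrow> (switch_step n)\<^sup>*\<^sup>* M1 M2 \<or> (switch_step n)\<^sup>*\<^sup>* M2 M1"

end

theory Submission
  imports Defs "HOL-Analysis.Analysis" "Jordan_Normal_Form.Spectral_Radius"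
begin

text \<open>
  A three-way switching with respect to an admissible partition \<open>p\<close> multiplies the
  \<open>(u, v)\<close> entry of \<open>N(M)\<close> by \<open>cnj (p u) * p v\<close>, i.e. it conjugates \<open>N(M)\<close> by the unitary
  diagonal matrix \<open>diag p\<close>; taking the converse transposes \<open>N(M)\<close>. Hence (d) implies (a),
  and (a) trivially implies (b).

  For (b) \<open>\<Longrightarrow>\<close> (c), let \<open>x\<close> be an eigenvector of \<open>N(M)\<close> for \<open>\<lambda>\<^sub>1(M)\<close> and \<open>y = |x|\<close>.
  By the Rayleigh principle for the adjacency matrix \<open>A\<close> of \<open>G\<close>,
  \<open>\<lambda>\<^sub>1(M) |y|\<^sup>2 = Re (x\<^sup>* N x) \<le> y\<^sup>T A y \<le> \<lambda>\<^sub>1(G) |y|\<^sup>2\<close>. If \<open>\<lambda>\<^sub>1(G) = \<lambda>\<^sub>1(M)\<close>, then \<open>y\<close>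
  maximises the Rayleigh quotient, so it is an eigenvector of \<open>A\<close> and, \<open>G\<close> being
  connected, positive; and every edge term is tight, which forces \<open>G\<^sub>1 = G\<close> and
  \<open>sgn x\<^sub>v = cnj (N\<^sub>u\<^sub>v) sgn x\<^sub>u\<close> along every edge. Normalising these phases at vertex \<open>0\<close>
  gives a labelling with values in \<open>\<bbbT>\<^sub>6\<close>, which is the partition of (c). Finally, switching
  \<open>G\<close> with respect to the conjugate labelling produces \<open>M\<close>, so (c) implies (d).
\<close>

section \<open>Unit complex numbers and sixth roots of unity\<close>

lemma cnj_omega_mult_omega [simp]: "cnj omega * omega = 1"
  and omega_mult_cnj_omega [simp]: "omega * cnj omega = 1"
  by (simp_all add: omega_def complex_eq_iff)

lemma omega_squared: "omega * omega = - cnj omega"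
  and cnj_omega_squared: "cnj omega * cnj omega = - omega"
  by (simp_all add: omega_def complex_eq_iff)

lemma omega_neq [simp]:
  "omega \<noteq> 0" "cnj omega \<noteq> 0" "omega \<noteq> 1" "cnj omega \<noteq> 1" "omega \<noteq> cnj omega"
  "1 \<noteq> omega" "1 \<noteq> cnj omega" "cnj omega \<noteq> omega"
  by (simp_all add: omega_def complex_eq_iff)

lemma T6_eq_roots_of_unity: "T6 = {z. z ^ 6 = 1}"
proof -
  have "z ^ 6 - 1 = (z - 1) * (z + 1) * ((z - omega) * (z - cnj omega)) * ((z + omega) * (z + cnj omega))"
    for z :: complex
  proof -
    have minus: "(z - omega) * (z - cnj omega) = z\<^sup>2 - z + 1"
      and plus: "(z + omega) * (z + cnj omega) = z\<^sup>2 + z + 1"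
      by (simp_all add: algebra_simps power2_eq_square omega_def complex_eq_iff)
    show ?thesis
      unfolding minus plus by (simp add: algebra_simps power2_eq_square eval_nat_numeral)
  qed
  then have "z ^ 6 = 1 \<longleftrightarrow> z \<in> T6" for z
    unfolding T6_def by (auto simp: eq_iff_diff_eq_0[of "z ^ 6"] eq_neg_iff_add_eq_0)
  then show ?thesis by auto
qed

lemma T6_mult: "a \<in> T6 \<Longrightarrow> b \<in> T6 \<Longrightarrow> a * b \<in> T6"
  by (simp add: T6_eq_roots_of_unity power_mult_distrib)

lemma T6_cnj: "a \<in> T6 \<Longrightarrow> cnj a \<in> T6"
  by (simp add: T6_eq_roots_of_unity flip: complex_cnj_power)

lemma T6_norm: assumes "a \<in> T6" shows "norm a = 1"
proof -
  have "norm a ^ 6 = 1" using assms by (simp add: T6_eq_roots_of_unity flip: norm_power)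
  then show ?thesis using power_eq_iff_eq_base[of 6 "norm a" 1] by simp
qed

lemma norm_omega [simp]: "norm omega = 1"
  using T6_norm by (simp add: T6_def)

lemma T6_cnj_mult: "a \<in> T6 \<Longrightarrow> cnj a * a = 1"
  using T6_norm by (metis complex_norm_square mult.commute of_real_1 power_one)

lemma unit_ratio_eq_iff:
  fixes a b c :: complex
  assumes a: "cnj a * a = 1" and b: "cnj b * b = 1"
  shows "b = c * a \<longleftrightarrow> cnj a * b = c"
    and "a = c * b \<longleftrightarrow> cnj a * b = cnj c"
proof -
  show "b = c * a \<longleftrightarrow> cnj a * b = c"
    by (metis a mult.assoc mult.commute mult_1_right)
  have "a = c * b \<longleftrightarrow> cnj a = cnj c * cnj b" by (metis complex_cnj_cnj complex_cnj_mult)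
  also have "\<dots> \<longleftrightarrow> cnj a * b = cnj c"
    by (metis b mult.assoc mult.commute mult_1_right)
  finally show "a = c * b \<longleftrightarrow> cnj a * b = cnj c" .
qed

lemma unit_mult_eq_iff:
  fixes u r c :: complex
  shows "cnj u * u = 1 \<Longrightarrow> u * r = c \<longleftrightarrow> r = cnj u * c"
  by (metis mult.assoc mult.commute mult_1_right)

section \<open>Entries of the Hermitian adjacency matrix\<close>

definition herm_entry :: "mixed_graph \<Rightarrow> nat \<Rightarrow> nat \<Rightarrow> complex" where
  "herm_entry M u v =
     (if snd M u v then omega else if snd M v u then cnj omega else if fst M u v then 1 else 0)"

lemma herm_adj_carrier: "herm_adj n M \<in> carrier_mat n n"
  unfolding herm_adj_def by simp

lemma herm_adj_index: "i < n \<Longrightarrow> j < n \<Longrightarrow> herm_adj n M $$ (i, j) = herm_entry M i j"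
  unfolding herm_adj_def herm_entry_def by simp

lemma herm_entry_undirected: "herm_entry (undirected G) u v = of_bool (G u v)"
  unfolding herm_entry_def undirected_def by simp

lemma herm_entry_eq_0_iff: "herm_entry M u v = 0 \<longleftrightarrow> \<not> underlying M u v"
  unfolding herm_entry_def underlying_def by simp

lemma underlying_bounds:
  "is_mixed_graph n M \<Longrightarrow> underlying M u v \<Longrightarrow> u < n \<and> v < n \<and> u \<noteq> v"
  unfolding is_mixed_graph_def simple_graph_def underlying_def by blast

lemma mixed_graph_pair_cases:
  assumes "is_mixed_graph n M"
  obtains (none) "\<not> underlying M u v" "\<not> underlying M v u" "herm_entry M u v = 0"
    | (edge) "fst M u v" "fst M v u" "\<not> snd M u v" "\<not> snd M v u" "herm_entry M u v = 1"
    | (arc) "snd M u v" "\<not> snd M v u" "\<not> fst M u v" "\<not> fst M v u" "herm_entry M u v = omega"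
    | (reverse_arc) "snd M v u" "\<not> snd M u v" "\<not> fst M u v" "\<not> fst M v u"
        "herm_entry M u v = cnj omega"
proof -
  have sym: "fst M v u \<longleftrightarrow> fst M u v"
    and arc: "snd M u v \<Longrightarrow> \<not> snd M v u \<and> \<not> fst M u v"
    and reverse_arc: "snd M v u \<Longrightarrow> \<not> snd M u v \<and> \<not> fst M v u"
    using assms unfolding is_mixed_graph_def simple_graph_def by blast+
  consider "fst M u v" | "snd M u v" | "snd M v u" | "\<not> underlying M u v"
    unfolding underlying_def by blast
  then show thesis
  proof cases
    case 1
    with sym arc reverse_arc have "fst M v u" "\<not> snd M u v" "\<not> snd M v u" by blast+
    with 1 show thesis by (rule that(2)) (simp add: herm_entry_def \<open>\<not> snd M u v\<close> \<open>\<not> snd M v u\<close> 1)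
  next
    case 2
    with sym arc have "\<not> snd M v u" "\<not> fst M u v" "\<not> fst M v u" by blast+
    with 2 show thesis by (rule that(3)) (simp add: herm_entry_def 2)
  next
    case 3
    with sym reverse_arc have "\<not> snd M u v" "\<not> fst M u v" "\<not> fst M v u" by blast+
    with 3 show thesis by (rule that(4)) (simp add: herm_entry_def 3 \<open>\<not> snd M u v\<close>)
  next
    case 4
    with sym have "\<not> underlying M v u" "herm_entry M u v = 0"
      by (auto simp: underlying_def herm_entry_def)
    with 4 show thesis by (rule that(1))
  qed
qed

lemma herm_entry_cnj:
  assumes "is_mixed_graph n M" shows "herm_entry M v u = cnj (herm_entry M u v)"
  using assms
  by (cases rule: mixed_graph_pair_cases[where u = u and v = v]) (simp_all add: herm_entry_def underlying_def)

lemma herm_entry_range: "underlying M u v \<Longrightarrow> herm_entry M u v \<in> {1, omega, cnj omega}"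
  unfolding herm_entry_def underlying_def by auto

lemma undirected_is_mixed_graph: "simple_graph n G \<Longrightarrow> is_mixed_graph n (undirected G)"
  unfolding is_mixed_graph_def undirected_def by simp

definition mixed_graph_of :: "(nat \<Rightarrow> nat \<Rightarrow> complex) \<Rightarrow> mixed_graph" where
  "mixed_graph_of E = ((\<lambda>u v. E u v = 1), (\<lambda>u v. E u v = omega))"

lemma mixed_graph_of_herm_entry: "is_mixed_graph n M \<Longrightarrow> mixed_graph_of (herm_entry M) = M"
proof -
  assume M: "is_mixed_graph n M"
  have "(herm_entry M u v = 1 \<longleftrightarrow> fst M u v) \<and> (herm_entry M u v = omega \<longleftrightarrow> snd M u v)" for u v
    by (cases rule: mixed_graph_pair_cases[OF M, where u = u and v = v]) (auto simp: underlying_def)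
  then show ?thesis unfolding mixed_graph_of_def by (simp add: prod_eq_iff fun_eq_iff)
qed

lemma herm_entry_mixed_graph_of:
  assumes "E v u = cnj (E u v)" and "E u v \<in> {0, 1, omega, cnj omega}"
  shows "herm_entry (mixed_graph_of E) u v = E u v"
  using assms unfolding herm_entry_def mixed_graph_of_def by auto

lemma is_mixed_graph_mixed_graph_of:
  assumes herm: "\<And>u v. E v u = cnj (E u v)"
    and support: "\<And>u v. E u v \<noteq> 0 \<Longrightarrow> u < n \<and> v < n \<and> u \<noteq> v"
  shows "is_mixed_graph n (mixed_graph_of E)"
  unfolding is_mixed_graph_def simple_graph_def mixed_graph_of_def fst_conv snd_conv
proof (intro conjI allI impI)
  fix u v
  assume "E u v = 1"
  then show "u < n" "v < n" "u \<noteq> v" "E v u = 1" using support[of u v] herm[of u v] by auto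
next
  fix u v
  assume "E u v = omega"
  then show "u < n" "v < n" "u \<noteq> v" "E v u \<noteq> omega" "E u v \<noteq> 1"
    using support[of u v] herm[of u v] by auto
qed

section \<open>Three-way switching\<close>

lemma partition6_relative_phase:
  assumes "partition6 n p" "u < n" "v < n"
  obtains r where "cnj (p u) * p v = r" "\<And>c. cnj (p u) * c * p v = c * r"
    and "\<And>c. p v = c * p u \<longleftrightarrow> r = c" "\<And>c. p v = - (c * p u) \<longleftrightarrow> r = - c"
    and "\<And>c. p u = c * p v \<longleftrightarrow> r = cnj c" "\<And>c. p u = - (c * p v) \<longleftrightarrow> r = - cnj c"
    and "p u = p v \<longleftrightarrow> r = 1"
proof -
  have units: "cnj (p u) * p u = 1" "cnj (p v) * p v = 1"
    using assms T6_cnj_mult unfolding partition6_def by blast+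
  show thesis
  proof (rule that[of "cnj (p u) * p v"])
    show ratio: "p v = c * p u \<longleftrightarrow> cnj (p u) * p v = c" "p u = c * p v \<longleftrightarrow> cnj (p u) * p v = cnj c"
      for c
      using unit_ratio_eq_iff[OF units] by blast+
    show "p v = - (c * p u) \<longleftrightarrow> cnj (p u) * p v = - c" "p u = - (c * p v) \<longleftrightarrow> cnj (p u) * p v = - cnj c"
      for c
      using ratio[of "- c"] by simp_all
    show "p u = p v \<longleftrightarrow> cnj (p u) * p v = 1" using ratio(1)[of 1] by auto
  qed (simp_all add: ac_simps)
qed

lemma three_way_switch_eq_mixed_graph_of:
  assumes M: "is_mixed_graph n M" and p: "partition6 n p"
  shows "three_way_switch p M = mixed_graph_of (\<lambda>u v. cnj (p u) * herm_entry M u v * p v)"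
proof -
  have "(fst (three_way_switch p M) u v \<longleftrightarrow> cnj (p u) * herm_entry M u v * p v = 1) \<and>
        (snd (three_way_switch p M) u v \<longleftrightarrow> cnj (p u) * herm_entry M u v * p v = omega)" for u v
  proof (cases "underlying M u v")
    case False
    then have "herm_entry M u v = 0" by (simp add: herm_entry_eq_0_iff)
    with False show ?thesis by (auto simp: three_way_switch_def underlying_def)
  next
    case True
    then have uv: "u < n" "v < n" using underlying_bounds[OF M] by blast+
    obtain r where entry: "cnj (p u) * p v = r" "\<And>c. cnj (p u) * c * p v = c * r"
      and ratio: "\<And>c. p v = c * p u \<longleftrightarrow> r = c" "\<And>c. p v = - (c * p u) \<longleftrightarrow> r = - c"
        "\<And>c. p u = c * p v \<longleftrightarrow> r = cnj c" "\<And>c. p u = - (c * p v) \<longleftrightarrow> r = - cnj c"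
        "p u = p v \<longleftrightarrow> r = 1"
      by (rule partition6_relative_phase[OF p uv]) (rule that)
    have "cnj omega * omega = 1" "cnj (cnj omega) * cnj omega = 1" by simp_all
    note omega_eq_iff = unit_mult_eq_iff[OF this(1)] unit_mult_eq_iff[OF this(2)]
    from M show ?thesis
      by (cases rule: mixed_graph_pair_cases[where u = u and v = v])
        (use True in \<open>auto simp: three_way_switch_def entry ratio omega_eq_iff omega_squared\<close>)
  qed
  then show ?thesis by (simp add: mixed_graph_of_def prod_eq_iff fun_eq_iff)
qed

lemma admissible_switched_entry:
  assumes M: "is_mixed_graph n M" and adm: "admissible n M p"
  shows "cnj (p u) * herm_entry M u v * p v \<in> {0, 1, omega, cnj omega}"
proof (cases "underlying M u v")
  case False
  then show ?thesis by (simp add: herm_entry_eq_0_iff)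
next
  case True
  have p: "partition6 n p" using adm unfolding admissible_def by blast
  from True have uv: "u < n" "v < n" using underlying_bounds[OF M] by blast+
  obtain r where entry: "cnj (p u) * p v = r" "\<And>c. cnj (p u) * c * p v = c * r"
    and ratio: "\<And>c. p v = c * p u \<longleftrightarrow> r = c" "\<And>c. p v = - (c * p u) \<longleftrightarrow> r = - c"
      "\<And>c. p u = c * p v \<longleftrightarrow> r = cnj c" "\<And>c. p u = - (c * p v) \<longleftrightarrow> r = - cnj c"
      "p u = p v \<longleftrightarrow> r = 1"
    by (rule partition6_relative_phase[OF p uv]) (rule that)
  from adm have "fst M u v \<Longrightarrow> p v = p u \<or> p v = omega * p u \<or> p u = omega * p v"
    and "snd M u v \<Longrightarrow> p v = p u \<or> p v = cnj omega * p u \<or> p v = - omega * p u"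
    and "snd M v u \<Longrightarrow> p u = p v \<or> p u = cnj omega * p v \<or> p u = - omega * p v"
    unfolding admissible_def by blast+
  then have "fst M u v \<Longrightarrow> r = 1 \<or> r = omega \<or> r = cnj omega"
    and "snd M u v \<Longrightarrow> r = 1 \<or> r = cnj omega \<or> r = - omega"
    and "snd M v u \<Longrightarrow> r = 1 \<or> r = omega \<or> r = - cnj omega"
    by (simp_all add: ratio eq_commute[of "p v" "p u"])
  with M show ?thesis
    by (cases rule: mixed_graph_pair_cases[where u = u and v = v])
      (auto simp: entry omega_squared cnj_omega_squared)
qed

lemma herm_entry_three_way_switch:
  assumes M: "is_mixed_graph n M" and adm: "admissible n M p"
  shows "herm_entry (three_way_switch p M) u v = cnj (p u) * herm_entry M u v * p v"
proof -
  have p: "partition6 n p" using adm unfolding admissible_def by blast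
  show ?thesis
    unfolding three_way_switch_eq_mixed_graph_of[OF M p]
    by (rule herm_entry_mixed_graph_of)
      (simp add: herm_entry_cnj[OF M, where u = u and v = v] ac_simps, rule admissible_switched_entry[OF M adm])
qed

lemma is_mixed_graph_three_way_switch:
  assumes M: "is_mixed_graph n M" and adm: "admissible n M p"
  shows "is_mixed_graph n (three_way_switch p M)"
proof -
  have p: "partition6 n p" using adm unfolding admissible_def by blast
  show ?thesis
    unfolding three_way_switch_eq_mixed_graph_of[OF M p]
  proof (rule is_mixed_graph_mixed_graph_of)
    fix u v
    show "cnj (p v) * herm_entry M v u * p u = cnj (cnj (p u) * herm_entry M u v * p v)"
      by (simp add: herm_entry_cnj[OF M, where u = u and v = v] ac_simps)
    assume "cnj (p u) * herm_entry M u v * p v \<noteq> 0"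
    then have "underlying M u v" by (auto simp: herm_entry_eq_0_iff)
    then show "u < n \<and> v < n \<and> u \<noteq> v" by (rule underlying_bounds[OF M])
  qed
qed

lemma mat_diag_eq_one: "(\<And>i. i < n \<Longrightarrow> f i = 1) \<Longrightarrow> mat_diag n f = 1\<^sub>m n"
  unfolding mat_diag_def by (rule eq_matI) auto

lemma herm_adj_three_way_switch:
  assumes M: "is_mixed_graph n M" and adm: "admissible n M p"
  shows "herm_adj n (three_way_switch p M) = mat_diag n (\<lambda>i. cnj (p i)) * herm_adj n M * mat_diag n p"
proof -
  have "mat_diag n (\<lambda>i. cnj (p i)) * herm_adj n M * mat_diag n p
      = Matrix.mat n n (\<lambda>(i, j). cnj (p i) * herm_adj n M $$ (i, j) * p j)"
    by (rule eq_matI) (auto simp: mat_diag_mult_left[OF herm_adj_carrier] mat_diag_mult_right[of _ n n])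
  also have "\<dots> = herm_adj n (three_way_switch p M)"
    by (rule eq_matI)
      (simp_all add: herm_adj_index herm_entry_three_way_switch[OF M adm] carrier_matD[OF herm_adj_carrier])
  finally show ?thesis ..
qed

lemma char_poly_three_way_switch:
  assumes M: "is_mixed_graph n M" and adm: "admissible n M p"
  shows "char_poly (herm_adj n (three_way_switch p M)) = char_poly (herm_adj n M)"
proof -
  have units: "cnj (p i) * p i = 1" if "i < n" for i
    using adm that T6_cnj_mult unfolding admissible_def partition6_def by blast
  let ?D = "mat_diag n p" and ?D' = "mat_diag n (\<lambda>i. cnj (p i))"
  have "mat_diag n (\<lambda>i. cnj (p i) * p i) = 1\<^sub>m n" "mat_diag n (\<lambda>i. p i * cnj (p i)) = 1\<^sub>m n"
    using units by (auto intro!: mat_diag_eq_one simp: mult.commute)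
  then have "?D' * ?D = 1\<^sub>m n" "?D * ?D' = 1\<^sub>m n" by simp_all
  then have "similar_mat_wit (herm_adj n (three_way_switch p M)) (herm_adj n M) ?D' ?D"
    unfolding similar_mat_wit_def herm_adj_three_way_switch[OF M adm]
    by (auto simp: herm_adj_carrier carrier_matD[OF mat_diag_dim] Let_def)
  then show ?thesis by (intro char_poly_similar) (auto simp: similar_mat_def)
qed

lemma is_mixed_graph_converse: "is_mixed_graph n M \<Longrightarrow> is_mixed_graph n (converse_mixed M)"
  unfolding is_mixed_graph_def converse_mixed_def simple_graph_def by auto

lemma char_poly_converse:
  assumes M: "is_mixed_graph n M"
  shows "char_poly (herm_adj n (converse_mixed M)) = char_poly (herm_adj n M)"
proof -
  have "herm_adj n (converse_mixed M) = transpose_mat (herm_adj n M)"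
    using M by (intro eq_matI)
      (auto simp: herm_adj_def converse_mixed_def is_mixed_graph_def simple_graph_def)
  then show ?thesis using char_poly_transpose_mat[OF herm_adj_carrier] by simp
qed

lemma switch_step_preserves_char_poly:
  assumes "(switch_step n)\<^sup>*\<^sup>* M M'" and "is_mixed_graph n M"
  shows "is_mixed_graph n M' \<and> char_poly (herm_adj n M') = char_poly (herm_adj n M)"
  using assms
proof (induction rule: rtranclp_induct)
  case (step M' M'')
  then show ?case
    unfolding switch_step_def
    using is_mixed_graph_three_way_switch char_poly_three_way_switch
      is_mixed_graph_converse char_poly_converse
    by metis
qed simp

lemma switching_equivalent_imp_cospectral:
  assumes "is_mixed_graph n M" "is_mixed_graph n M'" "switching_equivalent n M M'"
  shows "cospectral n M M'"
  using assms switch_step_preserves_char_poly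
  unfolding switching_equivalent_def cospectral_def eigenvalues_def by metis

text \<open>Condition (c) of the theorem, with \<open>V\<^sub>j = {v. p v = j}\<close>.\<close>

definition switching_partition :: "nat \<Rightarrow> mixed_graph \<Rightarrow> (nat \<Rightarrow> complex) \<Rightarrow> bool" where
  "switching_partition n M p \<longleftrightarrow> partition6 n p \<and>
     (\<forall>u v. fst M u v \<longrightarrow> p u = p v) \<and> (\<forall>u v. snd M u v \<longrightarrow> p v = cnj omega * p u)"

lemma switching_partition_iff:
  assumes M: "is_mixed_graph n M"
  shows "switching_partition n M p \<longleftrightarrow>
    partition6 n p \<and> (\<forall>u v. underlying M u v \<longrightarrow> p v = cnj (herm_entry M u v) * p u)"
proof -
  have "((\<forall>u v. fst M u v \<longrightarrow> p u = p v) \<and> (\<forall>u v. snd M u v \<longrightarrow> p v = cnj omega * p u))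
     \<longleftrightarrow> (\<forall>u v. underlying M u v \<longrightarrow> p v = cnj (herm_entry M u v) * p u)"
  proof (intro iffI allI impI conjI)
    fix u v
    assume labelling: "(\<forall>u v. fst M u v \<longrightarrow> p u = p v) \<and> (\<forall>u v. snd M u v \<longrightarrow> p v = cnj omega * p u)"
      and uv: "underlying M u v"
    from M show "p v = cnj (herm_entry M u v) * p u"
    proof (cases rule: mixed_graph_pair_cases[where u = u and v = v])
      case none
      then show ?thesis using uv by simp
    next
      case edge
      then have "p u = p v" using labelling by blast
      then show ?thesis using edge by simp
    next
      case arc
      then have "p v = cnj omega * p u" using labelling by blast
      then show ?thesis using arc by simp
    next
      case reverse_arc
      then have "p u = cnj omega * p v" using labelling by blast
      then show ?thesis using reverse_arc by (simp add: mult.assoc[symmetric])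
    qed
  next
    fix u v
    assume phase: "\<forall>u v. underlying M u v \<longrightarrow> p v = cnj (herm_entry M u v) * p u"
    show "p u = p v" if "fst M u v"
      using phase mixed_graph_pair_cases[OF M, where u = u and v = v] that
      by (metis complex_cnj_one mult_1 underlying_def)
    show "p v = cnj omega * p u" if "snd M u v"
      using phase mixed_graph_pair_cases[OF M, where u = u and v = v] that
      by (metis underlying_def)
  qed
  then show ?thesis unfolding switching_partition_def by blast
qed

lemma switching_partition_imp_switch_step:
  assumes G: "simple_graph n G" and M: "is_mixed_graph n M" and U: "underlying M = G"
    and "switching_partition n M p"
  shows "switch_step n (undirected G) M"
proof -
  have p: "partition6 n p" and phase: "\<forall>u v. G u v \<longrightarrow> p v = cnj (herm_entry M u v) * p u"
    using assms(4) unfolding switching_partition_iff[OF M] U by blast+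
  let ?q = "\<lambda>i. cnj (p i)"
  have q: "partition6 n ?q" using p T6_cnj unfolding partition6_def by blast
  have entry: "cnj (?q u) * herm_entry (undirected G) u v * ?q v = herm_entry M u v" for u v
  proof (cases "G u v")
    case True
    then have "p u \<in> T6" using G p unfolding simple_graph_def partition6_def by blast
    then have "p u * cnj (p u) = 1" using T6_cnj_mult by (simp add: mult.commute)
    with True show ?thesis using phase by (simp add: herm_entry_undirected mult.assoc)
  next
    case False
    then show ?thesis using U by (simp add: herm_entry_undirected herm_entry_eq_0_iff)
  qed
  have "three_way_switch ?q (undirected G) = M"
    unfolding three_way_switch_eq_mixed_graph_of[OF undirected_is_mixed_graph[OF G] q] entry
    by (rule mixed_graph_of_herm_entry[OF M])
  moreover have "admissible n (undirected G) ?q"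
    unfolding admissible_def
  proof (intro conjI q allI impI)
    fix u v
    assume "fst (undirected G) u v"
    then have "G u v" by (simp add: undirected_def)
    then have "herm_entry M u v \<in> {1, omega, cnj omega}" and "?q v = herm_entry M u v * ?q u"
      using U phase herm_entry_range by auto
    then show "?q v = ?q u \<or> ?q v = omega * ?q u \<or> ?q u = omega * ?q v"
      by (auto simp: mult.assoc)
  qed (simp add: undirected_def)
  ultimately show ?thesis unfolding switch_step_def by blast
qed

section \<open>Eigenvalues and the largest eigenvalue\<close>

lemma herm_adj_mult_vec_index:
  assumes "i < n" "w \<in> carrier_vec n"
  shows "vec_index (herm_adj n M *\<^sub>v w) i = (\<Sum>j<n. herm_entry M i j * vec_index w j)"
  using assms herm_adj_carrier[of n M]
  by (auto simp: scalar_prod_def herm_adj_index lessThan_atLeast0 intro!: sum.cong)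

lemma eigenvalue_herm_adj_iff:
  "eigenvalue (herm_adj n M) \<mu> \<longleftrightarrow>
     (\<exists>x. (\<exists>i<n. x i \<noteq> 0) \<and> (\<forall>i<n. (\<Sum>j<n. herm_entry M i j * x j) = \<mu> * x i))"
proof
  assume "eigenvalue (herm_adj n M) \<mu>"
  then obtain w where w: "w \<in> carrier_vec n" "w \<noteq> 0\<^sub>v n" "herm_adj n M *\<^sub>v w = \<mu> \<cdot>\<^sub>v w"
    unfolding eigenvalue_def eigenvector_def using herm_adj_carrier[of n M] by auto
  have "\<exists>i<n. vec_index w i \<noteq> 0"
    using w(1,2) by (metis eq_vecI carrier_vecD index_zero_vec)
  moreover have "(\<Sum>j<n. herm_entry M i j * vec_index w j) = \<mu> * vec_index w i" if "i < n" for i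
    using arg_cong[OF w(3), of "\<lambda>v. vec_index v i"] that w(1) by (simp add: herm_adj_mult_vec_index)
  ultimately show "\<exists>x. (\<exists>i<n. x i \<noteq> 0) \<and> (\<forall>i<n. (\<Sum>j<n. herm_entry M i j * x j) = \<mu> * x i)"
    by blast
next
  assume "\<exists>x. (\<exists>i<n. x i \<noteq> 0) \<and> (\<forall>i<n. (\<Sum>j<n. herm_entry M i j * x j) = \<mu> * x i)"
  then obtain x where x: "\<exists>i<n. x i \<noteq> 0" "\<And>i. i < n \<Longrightarrow> (\<Sum>j<n. herm_entry M i j * x j) = \<mu> * x i"
    by blast
  have nz: "Matrix.vec n x \<noteq> 0\<^sub>v n" using x(1) by (metis index_vec index_zero_vec(1))
  have "vec_index (herm_adj n M *\<^sub>v Matrix.vec n x) i = \<mu> * x i" if "i < n" for i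
    using that by (subst herm_adj_mult_vec_index) (simp_all add: x(2))
  then have "herm_adj n M *\<^sub>v Matrix.vec n x = \<mu> \<cdot>\<^sub>v Matrix.vec n x"
    by (intro eq_vecI) (simp_all add: carrier_matD[OF herm_adj_carrier])
  with nz show "eigenvalue (herm_adj n M) \<mu>"
    unfolding eigenvalue_def eigenvector_def carrier_matD[OF herm_adj_carrier]
    by (intro exI[of _ "Matrix.vec n x"]) simp
qed

lemma herm_form_eigenvector:
  assumes "\<And>i. i < n \<Longrightarrow> (\<Sum>j<n. herm_entry M i j * x j) = \<mu> * x i"
  shows "(\<Sum>i<n. \<Sum>j<n. cnj (x i) * herm_entry M i j * x j) = \<mu> * of_real (\<Sum>i<n. (norm (x i))\<^sup>2)"
proof -
  have "(\<Sum>i<n. \<Sum>j<n. cnj (x i) * herm_entry M i j * x j)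
      = (\<Sum>i<n. cnj (x i) * (\<Sum>j<n. herm_entry M i j * x j))"
    by (simp add: sum_distrib_left mult.assoc)
  also have "\<dots> = (\<Sum>i<n. cnj (x i) * (\<mu> * x i))" by (intro sum.cong refl) (simp add: assms)
  also have "\<dots> = \<mu> * (\<Sum>i<n. x i * cnj (x i))" by (simp add: sum_distrib_left mult_ac)
  also have "\<dots> = \<mu> * of_real (\<Sum>i<n. (norm (x i))\<^sup>2)" by (simp flip: complex_norm_square)
  finally show ?thesis .
qed

lemma eigenvalue_herm_adj_real:
  assumes M: "is_mixed_graph n M" and ev: "eigenvalue (herm_adj n M) \<mu>"
  shows "\<mu> \<in> \<real>"
proof -
  obtain x where x: "\<exists>i<n. x i \<noteq> 0" "\<And>i. i < n \<Longrightarrow> (\<Sum>j<n. herm_entry M i j * x j) = \<mu> * x i"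
    using ev unfolding eigenvalue_herm_adj_iff by blast
  define h where "h = (\<Sum>i<n. \<Sum>j<n. cnj (x i) * herm_entry M i j * x j)"
  define s where "s = (\<Sum>i<n. (norm (x i))\<^sup>2)"
  have "h = \<mu> * of_real s" unfolding h_def s_def by (rule herm_form_eigenvector[OF x(2)])
  moreover have "cnj h = h"
  proof -
    have "cnj h = (\<Sum>i<n. \<Sum>j<n. cnj (x j) * herm_entry M j i * x i)"
      unfolding h_def by (simp add: herm_entry_cnj[OF M, symmetric] mult_ac)
    also have "\<dots> = h" unfolding h_def by (rule sum.swap)
    finally show ?thesis .
  qed
  moreover have "s > 0"
    using x(1) unfolding s_def by (auto intro!: sum_pos2)
  ultimately have "cnj \<mu> = \<mu>"
    by (metis complex_cnj_complex_of_real complex_cnj_mult mult_cancel_right of_real_eq_0_iff less_irrefl)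
  then show ?thesis by (simp add: Reals_cnj_iff)
qed

lemma
  assumes M: "is_mixed_graph n M" and n: "0 < n"
  shows lambda1_eigenvalue: "eigenvalue (herm_adj n M) (of_real (lambda1 n M))"
    and eigenvalue_le_lambda1: "eigenvalue (herm_adj n M) (of_real x) \<Longrightarrow> x \<le> lambda1 n M"
proof -
  let ?R = "{x. eigenvalue (herm_adj n M) (complex_of_real x)}"
  have "?R \<subseteq> Re ` spectrum (herm_adj n M)"
    by (auto simp: spectrum_def image_iff intro!: exI[where x = "complex_of_real _"])
  then have fin: "finite ?R"
    using card_finite_spectrum(1)[OF herm_adj_carrier] finite_surj by blast
  obtain \<mu> where "\<mu> \<in> spectrum (herm_adj n M)"
    using spectrum_non_empty[OF herm_adj_carrier n] by blast
  then have "eigenvalue (herm_adj n M) \<mu>" by (simp add: spectrum_def)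
  moreover have "\<mu> = of_real (Re \<mu>)"
    using eigenvalue_herm_adj_real[OF M calculation] by (simp add: complex_is_Real_iff complex_eq_iff)
  ultimately have "Re \<mu> \<in> ?R" by simp
  then have ne: "?R \<noteq> {}" by blast
  show "eigenvalue (herm_adj n M) (of_real (lambda1 n M))"
    using Max_in[OF fin ne] unfolding lambda1_def by simp
  show "eigenvalue (herm_adj n M) (of_real x) \<Longrightarrow> x \<le> lambda1 n M"
    unfolding lambda1_def using Max_ge[OF fin] by simp
qed

lemma cospectral_imp_lambda1_eq:
  assumes "cospectral n M M'"
  shows "lambda1 n M = lambda1 n M'"
proof -
  have "char_poly (herm_adj n M) \<noteq> 0" for n M
    using degree_monic_char_poly[OF herm_adj_carrier[of n M]] by auto
  then have "eigenvalue (herm_adj n M) \<mu> \<longleftrightarrow> \<mu> \<in># eigenvalues n M" for n M \<mu>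
    by (simp add: eigenvalues_def eigenvalue_root_char_poly[OF herm_adj_carrier])
  then show ?thesis using assms unfolding cospectral_def lambda1_def by simp
qed

section \<open>The Rayleigh principle\<close>

definition quad_form :: "nat \<Rightarrow> (nat \<Rightarrow> nat \<Rightarrow> real) \<Rightarrow> (nat \<Rightarrow> real) \<Rightarrow> real" where
  "quad_form n a y = (\<Sum>i<n. \<Sum>j<n. a i j * y i * y j)"

definition sq_norm :: "nat \<Rightarrow> (nat \<Rightarrow> real) \<Rightarrow> real" where
  "sq_norm n y = (\<Sum>i<n. (y i)\<^sup>2)"

lemma quad_form_perturb:
  assumes sym: "\<And>i j. a i j = a j i" and i: "i < n"
  shows "quad_form n a (\<lambda>k. v k + t * (if k = i then 1 else 0))
       = quad_form n a v + 2 * t * (\<Sum>j<n. a i j * v j) + t\<^sup>2 * a i i"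
proof -
  let ?e = "\<lambda>k. if k = i then 1 else (0::real)"
  have delta: "(\<Sum>k<n. ?e k * f k) = f i" for f :: "nat \<Rightarrow> real"
  proof -
    have "(\<Sum>k<n. ?e k * f k) = (\<Sum>k<n. if k = i then f k else 0)" by (rule sum.cong) auto
    then show ?thesis using i by simp
  qed
  have "quad_form n a (\<lambda>k. v k + t * ?e k)
      = (\<Sum>k<n. \<Sum>j<n. a k j * v k * v j + t * (?e k * (a k j * v j))
          + t * (?e j * (a k j * v k)) + t\<^sup>2 * (?e k * (?e j * a k j)))"
    unfolding quad_form_def by (intro sum.cong refl) (simp add: algebra_simps power2_eq_square)
  also have "\<dots> = quad_form n a v + t * (\<Sum>k<n. ?e k * (\<Sum>j<n. a k j * v j))
      + t * (\<Sum>k<n. \<Sum>j<n. ?e j * (a k j * v k)) + t\<^sup>2 * (\<Sum>k<n. ?e k * (\<Sum>j<n. ?e j * a k j))"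
    unfolding quad_form_def by (simp add: sum.distrib sum_distrib_left)
  also have "(\<Sum>k<n. \<Sum>j<n. ?e j * (a k j * v k)) = (\<Sum>j<n. a i j * v j)"
    unfolding delta using sym by (simp add: mult.commute)
  finally show ?thesis unfolding delta by simp
qed

lemma sq_norm_perturb:
  assumes "i < n"
  shows "sq_norm n (\<lambda>k. v k + t * (if k = i then 1 else 0)) = sq_norm n v + 2 * t * v i + t\<^sup>2"
proof -
  have "sq_norm n (\<lambda>k. v k + t * (if k = i then 1 else 0))
      = (\<Sum>k<n. (v k)\<^sup>2 + (if k = i then 2 * t * v i + t\<^sup>2 else 0))"
    unfolding sq_norm_def by (intro sum.cong refl) (simp add: power2_eq_square algebra_simps)
  then show ?thesis unfolding sq_norm_def using assms by (simp add: sum.distrib)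
qed

lemma linear_coeff_zero_if_quadratic_nonpos:
  fixes c d :: real
  assumes "\<And>t. 2 * t * c + t\<^sup>2 * d \<le> 0"
  shows "c = 0"
proof (rule ccontr)
  assume c: "c \<noteq> 0"
  define D where "D = \<bar>d\<bar> + 1"
  have "D > 0" "2 * D + d > 0" unfolding D_def by (auto simp: abs_if)
  moreover have "2 * (c / D) * c + (c / D)\<^sup>2 * d = c\<^sup>2 * (2 * D + d) / D\<^sup>2"
    using \<open>D > 0\<close> by (simp add: field_simps power2_eq_square)
  ultimately have "2 * (c / D) * c + (c / D)\<^sup>2 * d > 0"
    using c by simp
  then show False using assms[of "c / D"] by linarith
qed

lemma rayleigh_maximiser_eigenvector:
  assumes sym: "\<And>i j. a i j = a j i"
    and le: "\<And>y. quad_form n a y \<le> m * sq_norm n y"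
    and eq: "quad_form n a v = m * sq_norm n v"
    and i: "i < n"
  shows "(\<Sum>j<n. a i j * v j) = m * v i"
proof -
  have "2 * t * ((\<Sum>j<n. a i j * v j) - m * v i) + t\<^sup>2 * (a i i - m) \<le> 0" for t
    using le[of "\<lambda>k. v k + t * (if k = i then 1 else 0)"] eq
    unfolding quad_form_perturb[OF sym i] sq_norm_perturb[OF i] by (simp add: algebra_simps)
  from linear_coeff_zero_if_quadratic_nonpos[OF this] show ?thesis by simp
qed

lemma sq_norm_nonneg: "sq_norm n y \<ge> 0"
  unfolding sq_norm_def by (simp add: sum_nonneg)

lemma sq_norm_pos_iff: "sq_norm n y > 0 \<longleftrightarrow> (\<exists>i<n. y i \<noteq> 0)"
proof
  show "\<exists>i<n. y i \<noteq> 0" if "sq_norm n y > 0"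
  proof (rule ccontr)
    assume "\<not> (\<exists>i<n. y i \<noteq> 0)"
    then have "sq_norm n y = 0" unfolding sq_norm_def by simp
    with that show False by simp
  qed
  show "sq_norm n y > 0" if "\<exists>i<n. y i \<noteq> 0"
    using that unfolding sq_norm_def by (auto intro!: sum_pos2)
qed

lemma quad_form_restrict_scale:
  "quad_form n a (\<lambda>i. if i < n then c * y i else 0) = c\<^sup>2 * quad_form n a y"
  unfolding quad_form_def by (auto simp: sum_distrib_left power2_eq_square mult_ac intro!: sum.cong)

lemma sq_norm_restrict_scale:
  "sq_norm n (\<lambda>i. if i < n then c * y i else 0) = c\<^sup>2 * sq_norm n y"
  unfolding sq_norm_def by (auto simp: sum_distrib_left power_mult_distrib intro!: sum.cong)

text \<open>
  Vectors are functions \<open>nat \<Rightarrow> real\<close> of which only the first \<open>n\<close> coordinates matter;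
  pinning the remaining ones to \<open>0\<close> makes the unit sphere compact in the product topology.
\<close>

lemma compact_sq_norm_sphere:
  "compact {y :: nat \<Rightarrow> real. (\<forall>i\<ge>n. y i = 0) \<and> sq_norm n y = 1}"
proof -
  let ?K = "PiE UNIV (\<lambda>i. if i < n then {-1..1::real} else {0})"
  have "compactin (product_topology (\<lambda>_. euclidean) UNIV) ?K"
    unfolding compactin_PiE by auto
  then have "compact ?K" by (simp add: euclidean_product_topology)
  moreover have "closed {y. sq_norm n y = 1}"
    unfolding sq_norm_def
    by (intro closed_Collect_eq continuous_intros continuous_on_product_coordinates)
  moreover have "{y. (\<forall>i\<ge>n. y i = 0) \<and> sq_norm n y = 1} = ?K \<inter> {y. sq_norm n y = 1}"
  proof -
    have "y \<in> ?K" if y: "\<forall>i\<ge>n. y i = 0" "sq_norm n y = 1" for y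
    proof -
      have "y i \<in> (if i < n then {-1..1} else {0})" for i
      proof (cases "i < n")
        case True
        then have "(y i)\<^sup>2 \<le> sq_norm n y"
          unfolding sq_norm_def by (intro member_le_sum) auto
        then have "\<bar>y i\<bar> \<le> 1" using y(2) abs_square_le_1 by metis
        with True show ?thesis by auto
      qed (use y in auto)
      then show ?thesis by (simp add: PiE_iff)
    qed
    then show ?thesis by (auto simp: PiE_iff split: if_splits)
  qed
  ultimately show ?thesis by (simp add: compact_Int_closed)
qed

lemma rayleigh_max:
  fixes a :: "nat \<Rightarrow> nat \<Rightarrow> real"
  assumes n: "0 < n" and sym: "\<And>i j. a i j = a j i"
  obtains m v where "\<exists>i<n. v i \<noteq> 0" and "\<And>i. i < n \<Longrightarrow> (\<Sum>j<n. a i j * v j) = m * v i"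
    and "\<And>y. quad_form n a y \<le> m * sq_norm n y"
proof -
  define S where "S = {y :: nat \<Rightarrow> real. (\<forall>i\<ge>n. y i = 0) \<and> sq_norm n y = 1}"
  have "(\<lambda>i. if i = 0 then 1 else 0) \<in> S"
    using n unfolding S_def sq_norm_def by (simp add: if_distrib[of "\<lambda>x. x\<^sup>2"] cong: if_cong)
  then have "S \<noteq> {}" by blast
  moreover have "continuous_on UNIV (quad_form n a)"
    unfolding quad_form_def by (intro continuous_intros continuous_on_product_coordinates)
  then have "continuous_on S (quad_form n a)" by (rule continuous_on_subset) simp
  ultimately have "\<exists>v\<in>S. \<forall>y\<in>S. quad_form n a y \<le> quad_form n a v"
    by (rule continuous_attains_sup[OF compact_sq_norm_sphere[of n, folded S_def]])
  then obtain v where v: "v \<in> S" and v_max: "\<And>y. y \<in> S \<Longrightarrow> quad_form n a y \<le> quad_form n a v"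
    by blast
  define m where "m = quad_form n a v"
  have bound: "quad_form n a y \<le> m * sq_norm n y" for y
  proof (cases "\<exists>i<n. y i \<noteq> 0")
    case False
    then show ?thesis by (simp add: quad_form_def sq_norm_def)
  next
    case True
    then have pos: "sq_norm n y > 0" by (simp add: sq_norm_pos_iff)
    define c where "c = 1 / sqrt (sq_norm n y)"
    have c2: "c\<^sup>2 * sq_norm n y = 1" unfolding c_def using pos by (simp add: power_divide)
    then have "(\<lambda>i. if i < n then c * y i else 0) \<in> S"
      unfolding S_def by (simp add: sq_norm_restrict_scale)
    then have "c\<^sup>2 * quad_form n a y \<le> m"
      using v_max unfolding m_def by (metis quad_form_restrict_scale)
    also have "m = c\<^sup>2 * (m * sq_norm n y)" using c2 by (simp add: algebra_simps)
    finally have "c\<^sup>2 * quad_form n a y \<le> c\<^sup>2 * (m * sq_norm n y)" .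
    moreover have "c\<^sup>2 > 0" unfolding c_def using pos by simp
    ultimately show ?thesis by simp
  qed
  have "sq_norm n v = 1" using v unfolding S_def by blast
  then have "\<exists>i<n. v i \<noteq> 0" by (simp flip: sq_norm_pos_iff)
  moreover have "quad_form n a v = m * sq_norm n v" using \<open>sq_norm n v = 1\<close> m_def by simp
  then have "\<And>i. i < n \<Longrightarrow> (\<Sum>j<n. a i j * v j) = m * v i"
    using rayleigh_maximiser_eigenvector[OF sym bound] by blast
  ultimately show thesis using that bound by blast
qed

section \<open>Graphs attaining the largest eigenvalue of their underlying graph\<close>

lemma connected_nonneg_eigenvector_pos:
  fixes y :: "nat \<Rightarrow> real"
  assumes G: "simple_graph n G" and C: "connected_graph n G"
    and nonneg: "\<And>i. y i \<ge> 0"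
    and ev: "\<And>i. i < n \<Longrightarrow> (\<Sum>j<n. of_bool (G i j) * y j) = m * y i"
    and nz: "\<exists>i<n. y i \<noteq> 0" and i: "i < n"
  shows "y i > 0"
proof (rule ccontr)
  assume "\<not> y i > 0"
  then have "y i = 0" using nonneg[of i] by linarith
  have "y w = 0" if "G\<^sup>*\<^sup>* i w" for w
    using that
  proof (induction rule: rtranclp_induct)
    case (step u w)
    then have "u < n" "w < n" using G unfolding simple_graph_def by blast+
    then have "(\<Sum>j<n. of_bool (G u j) * y j) = 0" using ev step.IH by simp
    then have "of_bool (G u w) * y w = 0"
      using sum_nonneg_eq_0_iff[of "{..<n}" "\<lambda>j. of_bool (G u j) * y j"] nonneg \<open>w < n\<close> by simp
    then show ?case using step.hyps(2) by simp
  qed (rule \<open>y i = 0\<close>)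
  then have "y w = 0" if "w < n" for w
    using C i that unfolding connected_graph_def by blast
  then show False using nz by blast
qed

lemma connected_labelling_in_T6:
  assumes C: "connected_graph n G" and G: "simple_graph n G"
    and p0: "p 0 = 1" and edge: "\<And>u v. G u v \<Longrightarrow> \<exists>c\<in>T6. p v = c * p u"
    and v: "v < n"
  shows "p v \<in> T6"
proof -
  have "G\<^sup>*\<^sup>* 0 v" using C v unfolding connected_graph_def by blast
  then show ?thesis
  proof (induction rule: rtranclp_induct)
    case base
    then show ?case using p0 by (simp add: T6_def)
  next
    case (step u w)
    then obtain c where "c \<in> T6" "p w = c * p u" using edge by blast
    then show ?case using step.IH T6_mult by simp
  qed
qed

lemma sgn_eq_if_Re_cnj_mult_eq_norm:
  fixes a b :: complex
  assumes Re: "Re (cnj a * b) = norm a * norm b" and "a \<noteq> 0" "b \<noteq> 0"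
  shows "sgn a = sgn b"
proof -
  have "(norm (cnj a * b))\<^sup>2 = (Re (cnj a * b))\<^sup>2 + (Im (cnj a * b))\<^sup>2" by (simp add: cmod_power2)
  then have "Im (cnj a * b) = 0" using Re by (simp add: norm_mult)
  then have "cnj a * b = of_real (norm a * norm b)" using Re by (simp add: complex_eq_iff)
  then have "a * (cnj a * b) = a * of_real (norm a * norm b)" by simp
  moreover have "a * (cnj a * b) = of_real ((norm a)\<^sup>2) * b"
    by (simp only: complex_norm_square mult.assoc)
  ultimately have "of_real ((norm a)\<^sup>2) * b = a * of_real (norm a * norm b)" by simp
  then show ?thesis using assms(2,3) by (simp add: sgn_eq field_simps power2_eq_square)
qed

lemma Re_herm_term_le:
  assumes "spanning_subgraph (underlying M) G"
  shows "Re (cnj a * herm_entry M i j * b) \<le> of_bool (G i j) * norm a * norm b"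
proof (cases "underlying M i j")
  case True
  then have "norm (herm_entry M i j) = 1" "G i j"
    using herm_entry_range[OF True] assms unfolding spanning_subgraph_def by auto
  then show ?thesis using complex_Re_le_cmod[of "cnj a * herm_entry M i j * b"] by (simp add: norm_mult)
next
  case False
  then show ?thesis by (simp add: herm_entry_eq_0_iff[symmetric])
qed

lemma lambda1_eq_imp_tight_eigenvector:
  assumes G: "simple_graph n G" and C: "connected_graph n G" and M: "is_mixed_graph n M"
    and S: "spanning_subgraph (underlying M) G" and L: "lambda1 n (undirected G) = lambda1 n M"
    and x_nz: "\<exists>i<n. x i \<noteq> 0"
    and x_ev: "\<And>i. i < n \<Longrightarrow> (\<Sum>j<n. herm_entry M i j * x j) = of_real (lambda1 n M) * x i"
  shows "\<forall>i<n. x i \<noteq> 0"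
    and "\<And>i j. G i j \<Longrightarrow> Re (cnj (x i) * herm_entry M i j * x j) = norm (x i) * norm (x j)"
proof -
  have n: "0 < n" using C unfolding connected_graph_def by blast
  define lam where "lam = lambda1 n M"
  define a where "a = (\<lambda>i j. of_bool (G i j) :: real)"
  define y where "y = (\<lambda>i. norm (x i))"
  define z where "z = (\<lambda>i j. Re (cnj (x i) * herm_entry M i j * x j))"
  have sym: "a i j = a j i" for i j using G unfolding a_def simple_graph_def by auto
  obtain m v where v_nz: "\<exists>i<n. v i \<noteq> 0" and v_ev: "\<And>i. i < n \<Longrightarrow> (\<Sum>j<n. a i j * v j) = m * v i"
    and rayleigh: "\<And>y. quad_form n a y \<le> m * sq_norm n y"
    by (rule rayleigh_max[OF n sym]) (rule that)
  have "eigenvalue (herm_adj n (undirected G)) (of_real m)"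
    unfolding eigenvalue_herm_adj_iff herm_entry_undirected
    using v_nz v_ev by (intro exI[of _ "\<lambda>i. of_real (v i)"]) (simp add: a_def flip: of_real_sum)
  then have "m \<le> lam"
    using eigenvalue_le_lambda1[OF undirected_is_mixed_graph[OF G] n] L unfolding lam_def by simp
  have z_le: "z i j \<le> a i j * y i * y j" for i j
    unfolding z_def a_def y_def by (rule Re_herm_term_le[OF S])
  have "(\<Sum>i<n. \<Sum>j<n. z i j) = lam * sq_norm n y"
    using arg_cong[OF herm_form_eigenvector[OF x_ev], of Re]
    unfolding z_def y_def sq_norm_def lam_def by simp
  moreover have "(\<Sum>i<n. \<Sum>j<n. z i j) \<le> quad_form n a y"
    unfolding quad_form_def by (intro sum_mono z_le)
  moreover have "quad_form n a y \<le> m * sq_norm n y" by (rule rayleigh)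
  moreover have "m * sq_norm n y \<le> lam * sq_norm n y"
    using \<open>m \<le> lam\<close> sq_norm_nonneg by (rule mult_right_mono)
  ultimately have q_eq: "quad_form n a y = m * sq_norm n y"
    and z_eq: "(\<Sum>i<n. \<Sum>j<n. z i j) = quad_form n a y"
    by linarith+
  have "y i > 0" if "i < n" for i
  proof (rule connected_nonneg_eigenvector_pos[OF G C])
    show "(\<Sum>j<n. of_bool (G i j) * y j) = m * y i" if "i < n" for i
      using rayleigh_maximiser_eigenvector[OF sym rayleigh q_eq that] by (simp add: a_def)
  qed (use x_nz \<open>i < n\<close> in \<open>auto simp: y_def\<close>)
  then show "\<forall>i<n. x i \<noteq> 0" by (auto simp: y_def)
  fix i j
  assume "G i j"
  then have "i < n" "j < n" using G unfolding simple_graph_def by blast+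
  have "(\<Sum>j<n. z i j) = (\<Sum>j<n. a i j * y i * y j)"
    using z_eq unfolding quad_form_def
    by (rule sum_mono_inv) (auto intro: sum_mono z_le \<open>i < n\<close>)
  then have "z i j = a i j * y i * y j"
    by (rule sum_mono_inv) (auto intro: z_le \<open>j < n\<close>)
  then show "Re (cnj (x i) * herm_entry M i j * x j) = norm (x i) * norm (x j)"
    using \<open>G i j\<close> by (simp add: z_def a_def y_def)
qed

lemma tight_eigenvector_imp_entry_phases:
  assumes G: "simple_graph n G" and C: "connected_graph n G"
    and S: "spanning_subgraph (underlying M) G"
    and x_nz: "\<And>i. i < n \<Longrightarrow> x i \<noteq> 0"
    and tight: "\<And>i j. G i j \<Longrightarrow> Re (cnj (x i) * herm_entry M i j * x j) = norm (x i) * norm (x j)"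
  shows "underlying M = G \<and>
    (\<exists>p. partition6 n p \<and> (\<forall>u v. G u v \<longrightarrow> p v = cnj (herm_entry M u v) * p u))"
proof -
  have edge: "underlying M u v \<and> sgn (x v) = cnj (herm_entry M u v) * sgn (x u)" if "G u v" for u v
  proof -
    have "u < n" "v < n" using G that unfolding simple_graph_def by blast+
    then have nz: "x u \<noteq> 0" "x v \<noteq> 0" by (simp_all add: x_nz)
    have uv: "underlying M u v"
    proof (rule ccontr)
      assume "\<not> underlying M u v"
      then have "Re (cnj (x u) * herm_entry M u v * x v) = 0" by (simp add: herm_entry_eq_0_iff[symmetric])
      with tight[OF that] nz show False by simp
    qed
    then have "herm_entry M u v \<in> {1, omega, cnj omega}" by (rule herm_entry_range)
    then have unit: "cnj (herm_entry M u v) * herm_entry M u v = 1" "norm (herm_entry M u v) = 1"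
      by auto
    have "herm_entry M u v \<noteq> 0" using uv by (simp add: herm_entry_eq_0_iff)
    then have "sgn (x u) = sgn (herm_entry M u v * x v)"
      using tight[OF that] nz unit
      by (intro sgn_eq_if_Re_cnj_mult_eq_norm) (simp_all add: mult.assoc norm_mult)
    also have "\<dots> = herm_entry M u v * sgn (x v)" using unit by (simp only: sgn_mult) (simp add: sgn_eq)
    finally have "cnj (herm_entry M u v) * sgn (x u) = sgn (x v)"
      using unit by (simp add: mult.assoc[symmetric])
    with uv show ?thesis by simp
  qed
  define p where "p = (\<lambda>i. sgn (x i) * cnj (sgn (x 0)))"
  have "0 < n" using C unfolding connected_graph_def by blast
  then have p0: "p 0 = 1"
    unfolding p_def using x_nz[of 0] by (simp flip: complex_norm_square add: norm_sgn)
  have p_edge: "p v = cnj (herm_entry M u v) * p u" if "G u v" for u v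
    using edge[OF that] by (simp add: p_def mult.assoc)
  have "\<exists>c\<in>T6. p w = c * p u" if "G u w" for u w
  proof -
    have "herm_entry M u w \<in> {1, omega, cnj omega}" using edge[OF that] herm_entry_range by blast
    then have "cnj (herm_entry M u w) \<in> T6" by (auto simp: T6_def)
    then show ?thesis using p_edge[OF that] by blast
  qed
  then have "partition6 n p"
    unfolding partition6_def using connected_labelling_in_T6[OF C G, where p = p, OF p0] by blast
  moreover have "underlying M = G"
    using S edge unfolding spanning_subgraph_def by (intro ext iffI) blast+
  ultimately show ?thesis using p_edge by blast
qed

lemma lambda1_eq_imp_switching_partition:
  assumes G: "simple_graph n G" and C: "connected_graph n G" and M: "is_mixed_graph n M"
    and S: "spanning_subgraph (underlying M) G" and L: "lambda1 n (undirected G) = lambda1 n M"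
  shows "underlying M = G \<and> (\<exists>p. switching_partition n M p)"
proof -
  have "0 < n" using C unfolding connected_graph_def by blast
  then obtain x where x_nz: "\<exists>i<n. x i \<noteq> 0"
    and x_ev: "\<And>i. i < n \<Longrightarrow> (\<Sum>j<n. herm_entry M i j * x j) = of_real (lambda1 n M) * x i"
    using lambda1_eigenvalue[OF M] unfolding eigenvalue_herm_adj_iff by blast
  have "underlying M = G \<and>
      (\<exists>p. partition6 n p \<and> (\<forall>u v. G u v \<longrightarrow> p v = cnj (herm_entry M u v) * p u))"
    using lambda1_eq_imp_tight_eigenvector[OF G C M S L x_nz x_ev]
    by (intro tight_eigenvector_imp_entry_phases[OF G C S, of x]) blast+
  then show ?thesis using switching_partition_iff[OF M] by metis
qed

theorem theorem4p3:
  fixes n :: nat and G :: rel and M :: mixed_graph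
  assumes "simple_graph n G" and "connected_graph n G"
    and "is_mixed_graph n M"
    and "spanning_subgraph (underlying M) G"
  shows "(cospectral n (undirected G) M \<longleftrightarrow> lambda1 n (undirected G) = lambda1 n M)
       \<and> (lambda1 n (undirected G) = lambda1 n M \<longleftrightarrow>
           (underlying M = G \<and>
            (\<exists>p. partition6 n p \<and>
                 (\<forall>u v. fst M u v \<longrightarrow> p u = p v) \<and>
                 (\<forall>u v. snd M u v \<longrightarrow> p v = cnj omega * p u))))
       \<and> ((underlying M = G \<and>
            (\<exists>p. partition6 n p \<and>
                 (\<forall>u v. fst M u v \<longrightarrow> p u = p v) \<and>
                 (\<forall>u v. snd M u v \<longrightarrow> p v = cnj omega * p u)))
           \<longleftrightarrow> switching_equivalent n (undirected G) M)"
proof -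
  note G = assms(1) and C = assms(2) and M = assms(3) and S = assms(4)
  have "cospectral n (undirected G) M" if "switching_equivalent n (undirected G) M"
    using switching_equivalent_imp_cospectral[OF undirected_is_mixed_graph[OF G] M that] .
  moreover have "lambda1 n (undirected G) = lambda1 n M" if "cospectral n (undirected G) M"
    using cospectral_imp_lambda1_eq[OF that] .
  moreover have "underlying M = G \<and> (\<exists>p. switching_partition n M p)"
    if "lambda1 n (undirected G) = lambda1 n M"
    using lambda1_eq_imp_switching_partition[OF G C M S that] .
  moreover have "switching_equivalent n (undirected G) M"
    if "underlying M = G" "switching_partition n M p" for p
    using switching_partition_imp_switch_step[OF G M that]
    unfolding switching_equivalent_def by blast
  ultimately show ?thesis unfolding switching_partition_def[symmetric] by blast
qed

end
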